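(* Let $G\le\operatorname{Homeo}(\mathfrak{C})$ be vigorous and approximately full. Let $C\in K_{\mathfrak{C}}$ and let $\Gamma\subseteq G$ be finite such that for $\gamma_1,\gamma_2\in\Gamma$, $C\gamma_1\cap C\gamma_2\neq\varnothing$ implies $\gamma_1=\gamma_2$. Let $g$ be a permutation of $\Gamma$, and let $\delta\in\operatorname{Homeo}(\mathfrak{C})$ be such that $\operatorname{supp}(\delta)\subseteq\bigcup_{\gamma\in\Gamma}C\gamma$ and, for each $\gamma\in\Gamma$, $\delta$ agrees with $\gamma^{-1}(\gamma g)$ on $C\gamma$ (i.e. $p\delta=(p\gamma^{-1})(\gamma g)$ for $p\in C\gamma$). If $O_G(C)$ is an even element of $(\mathcal{O}(G),+)$ or $g$ is an even permutation, then $\delta\in G$.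
   Context: $\mathfrak{C}$ denotes a Cantor space (a space homeomorphic to $\{0,1\}^\omega$). Groups of homeomorphisms act on the right, products composed left to right. $K_{\mathfrak{C}}$ denotes the set of non-empty proper clopen subsets of $\mathfrak{C}$. For $\gamma\in\operatorname{Homeo}(\mathfrak{C})$, $\operatorname{supp}(\gamma)=\{p\in\mathfrak{C}: p\gamma\neq p\}$. A subset $S\subseteq \operatorname{Homeo}(\mathfrak{C})$ is vigorous if for all clopen $A,B,C\subseteq\mathfrak{C}$ with $B,C$ non-empty proper subsets of $A$ there is $\gamma\in S$ with $\operatorname{supp}(\gamma)\subseteq A$ and $B\gamma\subseteq C$. $G$ is approximately full if whenever $\Gamma\subseteq G$ is finite, $\{D_\gamma\}_{\gamma\in\Gamma}$ is a partition of $\mathfrak{C}$ into clopen sets such that $\{D_\gamma\gamma\}_{\gamma\in\Gamma}$ is also a partition of $\mathfrak{C}$, and $\delta\in\Gamma$, there exists $\chi\in G$ with $\chi|_{D_\gamma}=\gamma|_{D_\gamma}$ for every $\gamma\in\Gamma\setminus\{\delta\}$. For $B\in K_{\mathfrak{C}}$, $O_G(B):=\{B\gamma:\gamma\in G\}$, and $\mathcal{O}(G):=\{O_G(B): B\in K_{\mathfrak{C}}\}$; it is an abelian group under $O_G(U)+O_G(V):=O_G(U\mu\cup V\nu)$, where $\mu,\nu\in G$ are any elements with $U\mu\cap V\nu=\varnothing$ and $U\mu\cup V\nu\neq\mathfrak{C}$. An element $x\in\mathcal{O}(G)$ is even if $x=y+y$ for some $y\in\mathcal{O}(G)$. *)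

theory Defs
  imports "HOL-Analysis.Analysis" "HOL-Combinatorics.Permutations"
begin

definition cantor_space :: "'a topology \<Rightarrow> bool" where
  "cantor_space X \<longleftrightarrow>
     X homeomorphic_space product_topology (\<lambda>_::nat. discrete_topology (UNIV::bool set)) UNIV"

text \<open>Homeomorphisms of X, represented as functions that are the identity outside the
  carrier (so that they are genuine bijections of the whole type).  Application
  "p gamma" of the paper is the function application "gamma p"; the paper's product
  "alpha beta" (first alpha, then beta) is "beta o alpha"; inverses are "inv".\<close>
definition Homeo :: "'a topology \<Rightarrow> ('a \<Rightarrow> 'a) set" where
  "Homeo X = {f. homeomorphic_map X X f \<and> (\<forall>x. x \<notin> topspace X \<longrightarrow> f x = x)}"

definition subgroup_Homeo :: "'a topology \<Rightarrow> ('a \<Rightarrow> 'a) set \<Rightarrow> bool" where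
  "subgroup_Homeo X G \<longleftrightarrow> G \<subseteq> Homeo X \<and> id \<in> G \<and>
     (\<forall>f\<in>G. \<forall>h\<in>G. h \<circ> f \<in> G) \<and> (\<forall>f\<in>G. inv f \<in> G)"

definition clopen_in :: "'a topology \<Rightarrow> 'a set \<Rightarrow> bool" where
  "clopen_in X A \<longleftrightarrow> openin X A \<and> closedin X A"

definition Kset :: "'a topology \<Rightarrow> 'a set set" where
  "Kset X = {A. clopen_in X A \<and> A \<noteq> {} \<and> A \<noteq> topspace X}"

definition supp :: "'a topology \<Rightarrow> ('a \<Rightarrow> 'a) \<Rightarrow> 'a set" where
  "supp X f = {p \<in> topspace X. f p \<noteq> p}"

definition vigorous :: "'a topology \<Rightarrow> ('a \<Rightarrow> 'a) set \<Rightarrow> bool" where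
  "vigorous X S \<longleftrightarrow>
     (\<forall>A B C. clopen_in X A \<and> clopen_in X B \<and> clopen_in X C \<and>
        B \<noteq> {} \<and> C \<noteq> {} \<and> B \<subset> A \<and> C \<subset> A \<longrightarrow>
        (\<exists>\<gamma>\<in>S. supp X \<gamma> \<subseteq> A \<and> \<gamma> ` B \<subseteq> C))"

definition clopen_partition :: "'a topology \<Rightarrow> 'i set \<Rightarrow> ('i \<Rightarrow> 'a set) \<Rightarrow> bool" where
  "clopen_partition X I D \<longleftrightarrow>
     (\<forall>i\<in>I. clopen_in X (D i) \<and> D i \<noteq> {}) \<and>
     (\<forall>i\<in>I. \<forall>j\<in>I. i \<noteq> j \<longrightarrow> D i \<inter> D j = {}) \<and>
     (\<Union>i\<in>I. D i) = topspace X"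

definition approx_full :: "'a topology \<Rightarrow> ('a \<Rightarrow> 'a) set \<Rightarrow> bool" where
  "approx_full X G \<longleftrightarrow>
     (\<forall>\<Gamma> D \<delta>. finite \<Gamma> \<and> \<Gamma> \<subseteq> G \<and> clopen_partition X \<Gamma> D \<and>
        clopen_partition X \<Gamma> (\<lambda>\<gamma>. \<gamma> ` D \<gamma>) \<and> \<delta> \<in> \<Gamma> \<longrightarrow>
        (\<exists>ch\<in>G. \<forall>\<gamma>\<in>\<Gamma> - {\<delta>}. \<forall>p\<in>D \<gamma>. ch p = \<gamma> p))"

definition orbitG :: "('a \<Rightarrow> 'a) set \<Rightarrow> 'a set \<Rightarrow> 'a set set" where
  "orbitG G B = {\<gamma> ` B | \<gamma>. \<gamma> \<in> G}"

definition orbits :: "'a topology \<Rightarrow> ('a \<Rightarrow> 'a) set \<Rightarrow> 'a set set set" where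
  "orbits X G = {orbitG G B | B. B \<in> Kset X}"

definition orbit_add :: "'a topology \<Rightarrow> ('a \<Rightarrow> 'a) set \<Rightarrow> 'a set set \<Rightarrow> 'a set set \<Rightarrow> 'a set set" where
  "orbit_add X G x y = (SOME z. \<exists>U V \<mu> \<nu>. U \<in> Kset X \<and> V \<in> Kset X \<and> \<mu> \<in> G \<and> \<nu> \<in> G \<and>
      x = orbitG G U \<and> y = orbitG G V \<and> \<mu> ` U \<inter> \<nu> ` V = {} \<and>
      \<mu> ` U \<union> \<nu> ` V \<noteq> topspace X \<and> z = orbitG G (\<mu> ` U \<union> \<nu> ` V))"

definition even_orbit :: "'a topology \<Rightarrow> ('a \<Rightarrow> 'a) set \<Rightarrow> 'a set set \<Rightarrow> bool" where
  "even_orbit X G x \<longleftrightarrow> (\<exists>y\<in>orbits X G. x = orbit_add X G y y)"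

end

theory Submission
  imports Defs
begin

(* Call the sets \<gamma> ` C, \<gamma> \<in> \<Gamma>, the translates of C.  The homeomorphism \<delta> permutes the
   translates as g permutes \<Gamma>, and such permutations of translates compose like the permutations
   of \<Gamma> themselves; so it suffices to realise generators of the relevant permutation group in G.
   For a clopen P with disjoint translates, approximate fullness realises a transposition of two
   translates of P by an element of G that is exact outside any prescribed clopen set W disjoint
   from the translates.  Splitting P into two clopen halves and taking W inside translates of the
   second half, the commutator of two such elements is exactly a 3-cycle of the translates of the
   first half; so all 3-cycles, hence all even permutations, are realised in G.  If O(C) is even,
   then C = P \<union> l ` P with l \<in> G, and a transposition of translates of C is a product of two
   disjoint transpositions of translates of P (indexed by \<Gamma> \<union> (\<lambda>\<gamma>. \<gamma> \<circ> l) ` \<Gamma>), hence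
   even; so then every permutation is realised. *)

section \<open>Sets of permutations closed under composition\<close>

lemma permutes_in_closure:
  assumes "finite A" "p permutes A"
    and "id \<in> S" "\<And>\<sigma> \<tau>. \<sigma> \<in> S \<Longrightarrow> \<tau> \<in> S \<Longrightarrow> \<sigma> \<circ> \<tau> \<in> S"
    and "\<And>a b. a \<in> A \<Longrightarrow> b \<in> A \<Longrightarrow> a \<noteq> b \<Longrightarrow> Transposition.transpose a b \<in> S"
  shows "p \<in> S"
  using assms(2,1)
proof (induction rule: permutes_induct)
  case id
  show ?case by (fact assms(3))
next
  case (swap a b p)
  then show ?case using assms(4,5) by blast
qed

lemma double_transposition_in_closure:
  assumes "\<And>\<sigma> \<tau>. \<sigma> \<in> S \<Longrightarrow> \<tau> \<in> S \<Longrightarrow> \<sigma> \<circ> \<tau> \<in> S"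
    and three_cycles: "\<And>a b c. a \<in> A \<Longrightarrow> b \<in> A \<Longrightarrow> c \<in> A \<Longrightarrow> a \<noteq> b \<Longrightarrow> b \<noteq> c \<Longrightarrow>
        Transposition.transpose a b \<circ> Transposition.transpose b c \<in> S"
    and "a \<in> A" "b \<in> A" "c \<in> A" "d \<in> A" "a \<noteq> b" "c \<noteq> d"
  shows "Transposition.transpose a b \<circ> Transposition.transpose c d \<in> S"
proof (cases "b = c")
  case True
  then show ?thesis using three_cycles assms(3-8) by blast
next
  case False
  have "Transposition.transpose a b \<circ> Transposition.transpose c d =
      (Transposition.transpose a b \<circ> Transposition.transpose b c) \<circ>
      (Transposition.transpose b c \<circ> Transposition.transpose c d)"
    by (simp add: fun_eq_iff)
  then show ?thesis using assms False by metis
qed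

lemma three_cycle_square:
  assumes "a \<noteq> b" "b \<noteq> c" "a \<noteq> c"
  shows "(Transposition.transpose b c \<circ> Transposition.transpose a b) \<circ>
    (Transposition.transpose b c \<circ> Transposition.transpose a b) =
    Transposition.transpose a b \<circ> Transposition.transpose b c"
  using assms by (auto simp: fun_eq_iff Transposition.transpose_def)

lemma evenperm_in_closure:
  assumes "finite A" "p permutes A" "evenperm p"
    and "id \<in> S" and comp: "\<And>\<sigma> \<tau>. \<sigma> \<in> S \<Longrightarrow> \<tau> \<in> S \<Longrightarrow> \<sigma> \<circ> \<tau> \<in> S"
    and "\<And>a b c. a \<in> A \<Longrightarrow> b \<in> A \<Longrightarrow> c \<in> A \<Longrightarrow> a \<noteq> b \<Longrightarrow> b \<noteq> c \<Longrightarrow>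
        Transposition.transpose a b \<circ> Transposition.transpose b c \<in> S"
  shows "p \<in> S"
proof -
  note double = double_transposition_in_closure[of S A, OF comp assms(6)]
  \<comment> \<open>Odd permutations enter S after one more transposition.\<close>
  have "(evenperm p \<longrightarrow> p \<in> S) \<and>
        (\<not> evenperm p \<longrightarrow> (\<forall>c\<in>A. \<forall>d\<in>A. c \<noteq> d \<longrightarrow> Transposition.transpose c d \<circ> p \<in> S))"
    using assms(2,1)
  proof (induction rule: permutes_induct)
    case id
    show ?case using assms(4) by (simp add: id_def)
  next
    case (swap a b p)
    have parity: "evenperm (Transposition.transpose a b \<circ> p) \<longleftrightarrow> \<not> evenperm p"
      using evenperm_comp[OF permutation_swap_id permutes_imp_permutation[OF assms(1) swap(4)]]
        evenperm_swap[of a b] swap(3) by simp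
    show ?case
    proof (intro conjI impI ballI)
      assume "evenperm (Transposition.transpose a b \<circ> p)"
      then show "Transposition.transpose a b \<circ> p \<in> S" using parity swap by blast
    next
      fix c d assume "\<not> evenperm (Transposition.transpose a b \<circ> p)" "c \<in> A" "d \<in> A" "c \<noteq> d"
      then have "p \<in> S" "Transposition.transpose c d \<circ> Transposition.transpose a b \<in> S"
        using parity swap double by blast+
      then show "Transposition.transpose c d \<circ> (Transposition.transpose a b \<circ> p) \<in> S"
        using comp by (metis comp_assoc)
    qed
  qed
  then show ?thesis using assms(3) by blast
qed

section \<open>Permutations of disjoint translates\<close>

definition disjoint_translates :: "('a \<Rightarrow> 'a) set \<Rightarrow> 'a set \<Rightarrow> bool" where
  "disjoint_translates \<Gamma> P \<longleftrightarrow> (\<forall>\<gamma>1\<in>\<Gamma>. \<forall>\<gamma>2\<in>\<Gamma>. \<gamma>1 ` P \<inter> \<gamma>2 ` P \<noteq> {} \<longrightarrow> \<gamma>1 = \<gamma>2)"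

text \<open>The choice of \<gamma> below is unique only when the translates are disjoint.\<close>

definition permute_translates ::
    "('a \<Rightarrow> 'a) set \<Rightarrow> 'a set \<Rightarrow> (('a \<Rightarrow> 'a) \<Rightarrow> ('a \<Rightarrow> 'a)) \<Rightarrow> 'a \<Rightarrow> 'a" where
  "permute_translates \<Gamma> P \<sigma> p =
     (if \<exists>\<gamma>\<in>\<Gamma>. p \<in> \<gamma> ` P
      then (let \<gamma> = SOME \<gamma>. \<gamma> \<in> \<Gamma> \<and> p \<in> \<gamma> ` P in \<sigma> \<gamma> (inv \<gamma> p))
      else p)"

lemma disjoint_translatesD:
  "disjoint_translates \<Gamma> P \<Longrightarrow> \<gamma>1 \<in> \<Gamma> \<Longrightarrow> \<gamma>2 \<in> \<Gamma> \<Longrightarrow> p \<in> \<gamma>1 ` P \<Longrightarrow> p \<in> \<gamma>2 ` P \<Longrightarrow> \<gamma>1 = \<gamma>2"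
  unfolding disjoint_translates_def by blast

lemma disjoint_translates_mono: "disjoint_translates \<Gamma> P \<Longrightarrow> Q \<subseteq> P \<Longrightarrow> disjoint_translates \<Gamma> Q"
  unfolding disjoint_translates_def by blast

lemma disjoint_translates_image_neq:
  assumes "disjoint_translates \<Gamma> (P \<union> Q)" "P \<inter> Q = {}" "inj \<gamma>'"
    and "\<gamma> \<in> \<Gamma>" "\<gamma>' \<in> \<Gamma>" "x \<in> P" "y \<in> Q"
  shows "\<gamma> x \<noteq> \<gamma>' y"
proof
  assume eq: "\<gamma> x = \<gamma>' y"
  then have "\<gamma> = \<gamma>'"
    using disjoint_translatesD[OF assms(1,4,5)] assms(6,7) by blast
  then show False using eq assms(2,3,6,7) by (metis disjoint_iff injD)
qed

lemma permute_translates_image: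
  assumes "disjoint_translates \<Gamma> P" "\<gamma> \<in> \<Gamma>" "inj \<gamma>" "x \<in> P"
  shows "permute_translates \<Gamma> P \<sigma> (\<gamma> x) = \<sigma> \<gamma> x"
proof -
  have ex: "\<exists>\<gamma>'. \<gamma>' \<in> \<Gamma> \<and> \<gamma> x \<in> \<gamma>' ` P" using assms(2,4) by blast
  have "(SOME \<gamma>'. \<gamma>' \<in> \<Gamma> \<and> \<gamma> x \<in> \<gamma>' ` P) = \<gamma>"
    using someI_ex[OF ex] disjoint_translatesD[OF assms(1) _ assms(2)] assms(4) by blast
  then show ?thesis using assms(2,3,4) by (auto simp: permute_translates_def)
qed

lemma permute_translates_outside:
  "\<not> (\<exists>\<gamma>\<in>\<Gamma>. p \<in> \<gamma> ` P) \<Longrightarrow> permute_translates \<Gamma> P \<sigma> p = p"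
  unfolding permute_translates_def by simp

lemma permute_translates_fixed:
  assumes "disjoint_translates \<Gamma> P" "\<gamma> \<in> \<Gamma>" "inj \<gamma>" "\<sigma> \<gamma> = \<gamma>" "p \<in> \<gamma> ` P"
  shows "permute_translates \<Gamma> P \<sigma> p = p"
  using assms permute_translates_image by fastforce

lemma permute_translates_id:
  assumes "disjoint_translates \<Gamma> P" "\<forall>\<gamma>\<in>\<Gamma>. inj \<gamma>"
  shows "permute_translates \<Gamma> P id = id"
proof
  fix p
  show "permute_translates \<Gamma> P id p = id p"
    using assms permute_translates_fixed[OF assms(1), of _ id p] permute_translates_outside
    by (cases "\<exists>\<gamma>\<in>\<Gamma>. p \<in> \<gamma> ` P") auto
qed

lemma permute_translates_comp:
  assumes dj: "disjoint_translates \<Gamma> P" and inj: "\<forall>\<gamma>\<in>\<Gamma>. inj \<gamma>" and \<sigma>: "\<forall>\<gamma>\<in>\<Gamma>. \<sigma> \<gamma> \<in> \<Gamma>"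
  shows "permute_translates \<Gamma> P \<tau> \<circ> permute_translates \<Gamma> P \<sigma> = permute_translates \<Gamma> P (\<tau> \<circ> \<sigma>)"
proof
  fix p
  show "(permute_translates \<Gamma> P \<tau> \<circ> permute_translates \<Gamma> P \<sigma>) p = permute_translates \<Gamma> P (\<tau> \<circ> \<sigma>) p"
  proof (cases "\<exists>\<gamma>\<in>\<Gamma>. p \<in> \<gamma> ` P")
    case True
    then obtain \<gamma> x where "\<gamma> \<in> \<Gamma>" "x \<in> P" "p = \<gamma> x" by blast
    then show ?thesis using permute_translates_image[OF dj] inj \<sigma> by simp
  next
    case False
    then show ?thesis by (simp add: permute_translates_outside)
  qed
qed

lemma permute_translates_bij:
  assumes "disjoint_translates \<Gamma> P" "\<forall>\<gamma>\<in>\<Gamma>. inj \<gamma>" "\<sigma> permutes \<Gamma>"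
  shows "bij (permute_translates \<Gamma> P \<sigma>)"
proof (rule o_bij)
  have "\<forall>\<gamma>\<in>\<Gamma>. \<sigma> \<gamma> \<in> \<Gamma>" "\<forall>\<gamma>\<in>\<Gamma>. inv \<sigma> \<gamma> \<in> \<Gamma>"
    using permutes_in_image[OF assms(3)] permutes_in_image[OF permutes_inv[OF assms(3)]] by blast+
  then show "permute_translates \<Gamma> P (inv \<sigma>) \<circ> permute_translates \<Gamma> P \<sigma> = id"
    and "permute_translates \<Gamma> P \<sigma> \<circ> permute_translates \<Gamma> P (inv \<sigma>) = id"
    using permute_translates_comp[OF assms(1,2)] permute_translates_id[OF assms(1,2)]
      permutes_inv_o[OF assms(3)] by simp_all
qed

lemma permute_translates_permutes:
  assumes "disjoint_translates \<Gamma> P" "\<forall>\<gamma>\<in>\<Gamma>. inj \<gamma>" "\<sigma> permutes \<Gamma>"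
  shows "permute_translates \<Gamma> P \<sigma> permutes (\<Union>\<gamma>\<in>\<Gamma>. \<gamma> ` P)"
  unfolding permutes_def
proof (intro conjI allI impI)
  fix p assume "p \<notin> (\<Union>\<gamma>\<in>\<Gamma>. \<gamma> ` P)"
  then show "permute_translates \<Gamma> P \<sigma> p = p" by (intro permute_translates_outside) blast
next
  fix q
  show "\<exists>!p. permute_translates \<Gamma> P \<sigma> p = q"
    using permute_translates_bij[OF assms] unfolding bij_iff by blast
qed

lemma permute_translates_transpose_apply:
  assumes "disjoint_translates \<Gamma> P" "\<forall>\<gamma>\<in>\<Gamma>. inj \<gamma>" "x \<in> \<Gamma>" "y \<in> \<Gamma>" "u \<in> P"
  shows "permute_translates \<Gamma> P (Transposition.transpose x y) (x u) = y u"
    and "permute_translates \<Gamma> P (Transposition.transpose x y) (y u) = x u"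
  using permute_translates_image[OF assms(1)] assms(2-5) by simp_all

lemma permute_translates_transpose_other:
  assumes "disjoint_translates \<Gamma> P" "\<forall>\<gamma>\<in>\<Gamma>. inj \<gamma>" "p \<notin> x ` P" "p \<notin> y ` P"
  shows "permute_translates \<Gamma> P (Transposition.transpose x y) p = p"
proof (cases "\<exists>\<gamma>\<in>\<Gamma>. p \<in> \<gamma> ` P")
  case True
  then obtain \<gamma> where \<gamma>: "\<gamma> \<in> \<Gamma>" "p \<in> \<gamma> ` P" by blast
  have "\<gamma> \<noteq> x" "\<gamma> \<noteq> y" using \<gamma>(2) assms(3,4) by blast+
  then have swap: "Transposition.transpose x y \<gamma> = \<gamma>" by simp
  have "inj \<gamma>" using assms(2) \<gamma>(1) by blast
  from permute_translates_fixed[where \<sigma> = "Transposition.transpose x y", OF assms(1) \<gamma>(1) this swap \<gamma>(2)]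
  show ?thesis .
next
  case False
  then show ?thesis by (rule permute_translates_outside)
qed

lemma permute_translates_transpose_involution:
  assumes "disjoint_translates \<Gamma> P" "\<forall>\<gamma>\<in>\<Gamma>. inj \<gamma>" "a \<in> \<Gamma>" "b \<in> \<Gamma>"
  shows "permute_translates \<Gamma> P (Transposition.transpose a b) \<circ>
    permute_translates \<Gamma> P (Transposition.transpose a b) = id"
  using permute_translates_comp[OF assms(1,2)] permute_translates_id[OF assms(1,2)]
    permutes_in_image[OF permutes_swap_id[OF assms(3,4)]]
  by simp

lemma permute_translates_three_cycle_square:
  assumes dj: "disjoint_translates \<Gamma> P" and inj: "\<forall>\<gamma>\<in>\<Gamma>. inj \<gamma>"
    and abc: "a \<in> \<Gamma>" "b \<in> \<Gamma>" "c \<in> \<Gamma>" "a \<noteq> b" "b \<noteq> c" "a \<noteq> c"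
  shows "permute_translates \<Gamma> P (Transposition.transpose b c) \<circ> permute_translates \<Gamma> P (Transposition.transpose a b) \<circ>
      permute_translates \<Gamma> P (Transposition.transpose b c) \<circ> permute_translates \<Gamma> P (Transposition.transpose a b) =
    permute_translates \<Gamma> P (Transposition.transpose a b \<circ> Transposition.transpose b c)"
proof -
  let ?\<tau> = "Transposition.transpose b c \<circ> Transposition.transpose a b"
  have maps: "\<forall>\<gamma>\<in>\<Gamma>. Transposition.transpose a b \<gamma> \<in> \<Gamma>" "\<forall>\<gamma>\<in>\<Gamma>. ?\<tau> \<gamma> \<in> \<Gamma>"
    using permutes_in_image[OF permutes_swap_id[OF abc(1,2)]]
      permutes_in_image[OF permutes_swap_id[OF abc(2,3)]] by simp_all
  have "permute_translates \<Gamma> P (Transposition.transpose b c) \<circ> permute_translates \<Gamma> P (Transposition.transpose a b) =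
      permute_translates \<Gamma> P ?\<tau>"
    by (rule permute_translates_comp[OF dj inj maps(1)])
  then have "permute_translates \<Gamma> P (Transposition.transpose b c) \<circ> permute_translates \<Gamma> P (Transposition.transpose a b) \<circ>
      permute_translates \<Gamma> P (Transposition.transpose b c) \<circ> permute_translates \<Gamma> P (Transposition.transpose a b) =
      permute_translates \<Gamma> P ?\<tau> \<circ> permute_translates \<Gamma> P ?\<tau>"
    by (metis comp_assoc)
  also have "\<dots> = permute_translates \<Gamma> P (?\<tau> \<circ> ?\<tau>)"
    by (rule permute_translates_comp[OF dj inj maps(2)])
  finally show ?thesis using three_cycle_square[OF abc(4-6)] by simp
qed

lemma permute_translates_Un:
  assumes dj: "disjoint_translates \<Gamma> (P \<union> Q)" and PQ: "P \<inter> Q = {}" and inj: "\<forall>\<gamma>\<in>\<Gamma>. inj \<gamma>"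
    and \<sigma>: "\<forall>\<gamma>\<in>\<Gamma>. \<sigma> \<gamma> \<in> \<Gamma>"
  shows "permute_translates \<Gamma> (P \<union> Q) \<sigma> = permute_translates \<Gamma> P \<sigma> \<circ> permute_translates \<Gamma> Q \<sigma>"
proof
  fix p
  have djP: "disjoint_translates \<Gamma> P" and djQ: "disjoint_translates \<Gamma> Q"
    using disjoint_translates_mono[OF dj] by blast+
  have PQ_neq: "\<gamma> x \<noteq> \<gamma>' y" if "\<gamma> \<in> \<Gamma>" "\<gamma>' \<in> \<Gamma>" "x \<in> P" "y \<in> Q" for \<gamma> \<gamma>' x y
    using disjoint_translates_image_neq[OF dj PQ] inj that by blast
  show "permute_translates \<Gamma> (P \<union> Q) \<sigma> p = (permute_translates \<Gamma> P \<sigma> \<circ> permute_translates \<Gamma> Q \<sigma>) p"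
  proof (cases "\<exists>\<gamma>\<in>\<Gamma>. p \<in> \<gamma> ` (P \<union> Q)")
    case True
    then obtain \<gamma> x where \<gamma>: "\<gamma> \<in> \<Gamma>" "x \<in> P \<union> Q" "p = \<gamma> x" by blast
    have whole: "permute_translates \<Gamma> (P \<union> Q) \<sigma> p = \<sigma> \<gamma> x"
      using permute_translates_image[OF dj] \<gamma> inj by simp
    show ?thesis
    proof (cases "x \<in> P")
      case True
      then have "\<not> (\<exists>\<gamma>'\<in>\<Gamma>. p \<in> \<gamma>' ` Q)" using PQ_neq \<gamma> by (metis imageE)
      then have "permute_translates \<Gamma> Q \<sigma> p = p" by (rule permute_translates_outside)
      then show ?thesis using whole permute_translates_image[OF djP] True \<gamma> inj by simp
    next
      case False
      then have "\<not> (\<exists>\<gamma>'\<in>\<Gamma>. \<sigma> \<gamma> x \<in> \<gamma>' ` P)" using PQ_neq \<gamma> \<sigma> by (metis UnE imageE)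
      then have "permute_translates \<Gamma> P \<sigma> (\<sigma> \<gamma> x) = \<sigma> \<gamma> x" by (rule permute_translates_outside)
      then show ?thesis using whole permute_translates_image[OF djQ] False \<gamma> inj by simp
    qed
  next
    case False
    then show ?thesis by (simp add: permute_translates_outside image_Un)
  qed
qed

lemma comp_right_cancel: "surj l \<Longrightarrow> x \<circ> l = y \<circ> l \<longleftrightarrow> x = y"
  by (metis surj_fun_eq)

lemma transpose_comp_right:
  "surj l \<Longrightarrow> Transposition.transpose (a \<circ> l) (b \<circ> l) (x \<circ> l) = Transposition.transpose a b x \<circ> l"
  by (simp add: Transposition.transpose_def comp_right_cancel)

lemma right_translates_disjoint:
  assumes dj: "disjoint_translates \<Gamma> (P \<union> l ` P)" and "P \<inter> l ` P = {}" "P \<noteq> {}"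
    and "\<forall>\<gamma>\<in>\<Gamma>. inj \<gamma>"
  shows "\<Gamma> \<inter> (\<lambda>\<gamma>. \<gamma> \<circ> l) ` \<Gamma> = {}"
proof (rule ccontr)
  assume "\<Gamma> \<inter> (\<lambda>\<gamma>. \<gamma> \<circ> l) ` \<Gamma> \<noteq> {}"
  then obtain \<gamma> \<gamma>' where \<gamma>: "\<gamma> \<in> \<Gamma>" "\<gamma>' \<in> \<Gamma>" "\<gamma> = \<gamma>' \<circ> l" by blast
  obtain x where x: "x \<in> P" using assms(3) by blast
  then show False
    using disjoint_translates_image_neq[OF dj assms(2)] \<gamma> assms(4) by (metis comp_apply imageI)
qed

lemma disjoint_translates_right_compose:
  assumes dj: "disjoint_translates \<Gamma> (P \<union> l ` P)" and PlP: "P \<inter> l ` P = {}" and inj: "\<forall>\<gamma>\<in>\<Gamma>. inj \<gamma>"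
  shows "disjoint_translates (\<Gamma> \<union> (\<lambda>\<gamma>. \<gamma> \<circ> l) ` \<Gamma>) P"
  unfolding disjoint_translates_def
proof (intro ballI impI)
  fix \<eta>1 \<eta>2 assume \<eta>: "\<eta>1 \<in> \<Gamma> \<union> (\<lambda>\<gamma>. \<gamma> \<circ> l) ` \<Gamma>" "\<eta>2 \<in> \<Gamma> \<union> (\<lambda>\<gamma>. \<gamma> \<circ> l) ` \<Gamma>"
    and "\<eta>1 ` P \<inter> \<eta>2 ` P \<noteq> {}"
  then obtain x y where xy: "x \<in> P" "y \<in> P" "\<eta>1 x = \<eta>2 y" by blast
  obtain \<gamma>1 \<gamma>2 where \<gamma>: "\<gamma>1 \<in> \<Gamma>" "\<gamma>2 \<in> \<Gamma>" "\<eta>1 = \<gamma>1 \<or> \<eta>1 = \<gamma>1 \<circ> l" "\<eta>2 = \<gamma>2 \<or> \<eta>2 = \<gamma>2 \<circ> l"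
    using \<eta> by blast
  have "\<eta>1 x \<in> \<gamma>1 ` (P \<union> l ` P)" "\<eta>2 y \<in> \<gamma>2 ` (P \<union> l ` P)" using \<gamma>(3,4) xy(1,2) by auto
  then have "\<gamma>1 = \<gamma>2" using disjoint_translatesD[OF dj \<gamma>(1,2)] xy(3) by simp
  moreover have False if "\<gamma>1 x = \<gamma>1 (l y) \<or> \<gamma>1 (l x) = \<gamma>1 y"
    using that inj \<gamma>(1) PlP xy(1,2) by (metis disjoint_iff imageI injD)
  ultimately show "\<eta>1 = \<eta>2" using \<gamma>(3,4) xy(3) by auto
qed

lemma permute_translates_transpose_lift:
  assumes dj: "disjoint_translates \<Gamma> (P \<union> l ` P)" and PlP: "P \<inter> l ` P = {}"
    and inj: "\<forall>\<gamma>\<in>\<Gamma>. inj \<gamma>" and l: "bij l" and \<Gamma>l: "\<Gamma> \<inter> (\<lambda>\<gamma>. \<gamma> \<circ> l) ` \<Gamma> = {}"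
    and ab: "a \<in> \<Gamma>" "b \<in> \<Gamma>"
  shows "permute_translates \<Gamma> (P \<union> l ` P) (Transposition.transpose a b) =
    permute_translates (\<Gamma> \<union> (\<lambda>\<gamma>. \<gamma> \<circ> l) ` \<Gamma>) P
      (Transposition.transpose a b \<circ> Transposition.transpose (a \<circ> l) (b \<circ> l))"
    (is "?lhs = permute_translates ?\<Gamma>2 P ?\<sigma>")
proof
  fix q
  have dj2: "disjoint_translates ?\<Gamma>2 P" using disjoint_translates_right_compose[OF dj PlP inj] .
  have inj2: "\<forall>\<eta>\<in>?\<Gamma>2. inj \<eta>" using inj l by (auto intro: inj_compose bij_is_inj)
  have \<sigma>_left: "?\<sigma> \<gamma> = Transposition.transpose a b \<gamma>" if "\<gamma> \<in> \<Gamma>" for \<gamma>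
    using that ab \<Gamma>l by (metis disjoint_iff image_eqI comp_apply transpose_apply_other)
  have \<sigma>_right: "?\<sigma> (\<gamma> \<circ> l) = Transposition.transpose a b \<gamma> \<circ> l" if "\<gamma> \<in> \<Gamma>" for \<gamma>
  proof -
    have "Transposition.transpose a b \<gamma> \<in> \<Gamma>"
      using permutes_in_image[OF permutes_swap_id[OF ab]] that by blast
    then have "Transposition.transpose a b \<gamma> \<circ> l \<notin> \<Gamma>" using \<Gamma>l by blast
    then show ?thesis
      using transpose_comp_right[OF bij_is_surj[OF l]] ab by (metis comp_apply transpose_apply_other)
  qed
  show "?lhs q = permute_translates ?\<Gamma>2 P ?\<sigma> q"
  proof (cases "\<exists>\<gamma>\<in>\<Gamma>. q \<in> \<gamma> ` (P \<union> l ` P)")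
    case True
    then obtain \<gamma> x where \<gamma>: "\<gamma> \<in> \<Gamma>" "x \<in> P" "q = \<gamma> x \<or> q = (\<gamma> \<circ> l) x" by auto
    have "\<gamma> \<in> ?\<Gamma>2" "\<gamma> \<circ> l \<in> ?\<Gamma>2" using \<gamma>(1) by blast+
    then have "permute_translates ?\<Gamma>2 P ?\<sigma> (\<gamma> x) = ?\<sigma> \<gamma> x"
      "permute_translates ?\<Gamma>2 P ?\<sigma> ((\<gamma> \<circ> l) x) = ?\<sigma> (\<gamma> \<circ> l) x"
      using permute_translates_image[OF dj2] inj2 \<gamma>(2) by blast+
    moreover have "?lhs (\<gamma> x) = Transposition.transpose a b \<gamma> x"
      "?lhs ((\<gamma> \<circ> l) x) = Transposition.transpose a b \<gamma> (l x)"
      using permute_translates_image[OF dj \<gamma>(1)] inj \<gamma>(1,2) by auto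
    ultimately show ?thesis using \<gamma> \<sigma>_left \<sigma>_right by auto
  next
    case False
    then have "\<not> (\<exists>\<eta>\<in>?\<Gamma>2. q \<in> \<eta> ` P)" by (auto simp: image_comp[symmetric])
    then show ?thesis using False by (simp add: permute_translates_outside)
  qed
qed

lemma Homeo_eq_permute_translates:
  assumes "\<delta> \<in> Homeo X" "supp X \<delta> \<subseteq> (\<Union>\<gamma>\<in>\<Gamma>. \<gamma> ` C)"
    and agree: "\<forall>\<gamma>\<in>\<Gamma>. \<forall>p\<in>\<gamma> ` C. \<delta> p = \<sigma> \<gamma> (inv \<gamma> p)"
    and dj: "disjoint_translates \<Gamma> C" and inj: "\<forall>\<gamma>\<in>\<Gamma>. inj \<gamma>"
  shows "\<delta> = permute_translates \<Gamma> C \<sigma>"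
proof
  fix p
  show "\<delta> p = permute_translates \<Gamma> C \<sigma> p"
  proof (cases "\<exists>\<gamma>\<in>\<Gamma>. p \<in> \<gamma> ` C")
    case True
    then obtain \<gamma> x where "\<gamma> \<in> \<Gamma>" "x \<in> C" "p = \<gamma> x" by blast
    then show ?thesis using agree permute_translates_image[OF dj] inj by (simp add: inv_f_f)
  next
    case False
    then have "\<delta> p = p" using assms(1,2) unfolding Homeo_def supp_def by blast
    then show ?thesis using False by (simp add: permute_translates_outside)
  qed
qed

section \<open>Commutators of perturbed involutions\<close>

lemma involution_maps_outside:
  assumes "\<forall>p\<in>W. s p = p" "s \<circ> s = id" "p \<notin> W"
  shows "s p \<notin> W"
  using assms by (metis comp_apply id_apply)

lemma inv_agrees_off:
  assumes c: "bij c" and agree: "\<forall>p. p \<notin> W \<longrightarrow> c p = s p" and "\<forall>p\<in>W. s p = p" "s \<circ> s = id"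
  shows "p \<notin> W \<Longrightarrow> inv c p = s p" and "p \<in> W \<Longrightarrow> inv c p \<in> W"
proof -
  have outside: "s q \<notin> W" if "q \<notin> W" for q using involution_maps_outside assms(3,4) that .
  show "inv c p = s p" if "p \<notin> W"
  proof -
    have "c (s p) = s (s p)" using agree outside[OF that] by blast
    also have "\<dots> = p" using \<open>s \<circ> s = id\<close> by (metis comp_apply id_apply)
    finally show ?thesis using c by (metis bij_inv_eq_iff)
  qed
  show "inv c p \<in> W" if "p \<in> W"
  proof (rule ccontr)
    assume "inv c p \<notin> W"
    then have "p = s (inv c p)" using agree c by (metis bij_inv_eq_iff)
    then show False using outside \<open>inv c p \<notin> W\<close> that by metis
  qed
qed

lemma commutator_of_perturbed_involutions:
  assumes c1: "bij c1" and c2: "bij c2"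
    and agree1: "\<forall>p. p \<notin> W1 \<longrightarrow> c1 p = s1 p" and agree2: "\<forall>p. p \<notin> W2 \<longrightarrow> c2 p = s2 p"
    and fix1: "\<forall>p\<in>W1 \<union> W2. s1 p = p" and fix2: "\<forall>p\<in>W1 \<union> W2. s2 p = p"
    and W12: "W1 \<inter> W2 = {}" and inv1: "s1 \<circ> s1 = id" and inv2: "s2 \<circ> s2 = id"
  shows "c1 \<circ> c2 \<circ> inv c1 \<circ> inv c2 = s1 \<circ> s2 \<circ> s1 \<circ> s2"
proof
  fix p
  have c1_inv: "c1 (inv c1 q) = q" and c2_inv: "c2 (inv c2 q) = q" for q
    using c1 c2 by (simp_all add: bij_is_surj surj_f_inv_f)
  have "\<forall>p\<in>W1. s1 p = p" "\<forall>p\<in>W2. s2 p = p" using fix1 fix2 by blast+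
  note inv_c1 = inv_agrees_off[OF c1 agree1 this(1) inv1]
  note inv_c2 = inv_agrees_off[OF c2 agree2 \<open>\<forall>p\<in>W2. s2 p = p\<close> inv2]
  consider "p \<in> W1" | "p \<in> W2" | "p \<notin> W1 \<union> W2" by blast
  then show "(c1 \<circ> c2 \<circ> inv c1 \<circ> inv c2) p = (s1 \<circ> s2 \<circ> s1 \<circ> s2) p"
  proof cases
    case 1
    then have "p \<notin> W2" "inv c1 p \<in> W1" "inv c1 p \<notin> W2" using inv_c1 W12 by auto
    then have "inv c2 p = p" "c2 (inv c1 p) = inv c1 p" using inv_c2(1) agree2 fix2 1 by auto
    then show ?thesis using 1 fix1 fix2 c1_inv by simp
  next
    case 2
    then have "inv c2 p \<in> W2" "inv c2 p \<notin> W1" "p \<notin> W1" using inv_c2 W12 by auto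
    then have "inv c1 (inv c2 p) = inv c2 p" "c1 p = p"
      using inv_c1(1) agree1 fix1 2 by auto
    then show ?thesis using 2 fix1 fix2 c2_inv by simp
  next
    case 3
    have out1: "s1 q \<notin> W1 \<union> W2" and out2: "s2 q \<notin> W1 \<union> W2" if "q \<notin> W1 \<union> W2" for q
      using involution_maps_outside[OF fix1 inv1] involution_maps_outside[OF fix2 inv2] that by blast+
    have a: "inv c2 p = s2 p" "s2 p \<notin> W1 \<union> W2" using inv_c2(1) out2 3 by auto
    then have b: "inv c1 (s2 p) = s1 (s2 p)" "s1 (s2 p) \<notin> W1 \<union> W2" using inv_c1(1) out1 by auto
    then have c: "c2 (s1 (s2 p)) = s2 (s1 (s2 p))" "s2 (s1 (s2 p)) \<notin> W1 \<union> W2"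
      using agree2 out2 by auto
    then have "c1 (s2 (s1 (s2 p))) = s1 (s2 (s1 (s2 p)))" using agree1 by auto
    with a b c show ?thesis by simp
  qed
qed

section \<open>Clopen sets and Cantor spaces\<close>

lemma clopen_in_subset: "clopen_in X A \<Longrightarrow> A \<subseteq> topspace X"
  unfolding clopen_in_def by (simp add: openin_subset)

lemma clopen_in_topspace: "clopen_in X (topspace X)"
  unfolding clopen_in_def by auto

lemma clopen_in_Int: "clopen_in X A \<Longrightarrow> clopen_in X B \<Longrightarrow> clopen_in X (A \<inter> B)"
  unfolding clopen_in_def by auto

lemma clopen_in_Un: "clopen_in X A \<Longrightarrow> clopen_in X B \<Longrightarrow> clopen_in X (A \<union> B)"
  unfolding clopen_in_def by auto

lemma clopen_in_Diff: "clopen_in X A \<Longrightarrow> clopen_in X B \<Longrightarrow> clopen_in X (A - B)"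
  unfolding clopen_in_def by (auto intro: openin_diff closedin_diff)

lemma clopen_in_Union: "finite \<F> \<Longrightarrow> (\<And>A. A \<in> \<F> \<Longrightarrow> clopen_in X A) \<Longrightarrow> clopen_in X (\<Union>\<F>)"
  unfolding clopen_in_def by (auto intro: closedin_Union)

lemma clopen_partition_merge:
  fixes Q :: "'i \<Rightarrow> 'a set" and h :: "'i \<Rightarrow> 'c"
  assumes "finite I" "\<forall>i\<in>I. clopen_in X (Q i)" "\<forall>i\<in>I. \<forall>j\<in>I. i \<noteq> j \<longrightarrow> Q i \<inter> Q j = {}"
    and "(\<Union>i\<in>I. Q i) = topspace X"
  shows "clopen_partition X (h ` {i\<in>I. Q i \<noteq> {}}) (\<lambda>\<gamma>. \<Union>i\<in>{i\<in>I. h i = \<gamma>}. Q i)"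
  unfolding clopen_partition_def
proof (intro conjI ballI impI)
  fix \<gamma> assume "\<gamma> \<in> h ` {i\<in>I. Q i \<noteq> {}}"
  then show "clopen_in X (\<Union>i\<in>{i\<in>I. h i = \<gamma>}. Q i)" "(\<Union>i\<in>{i\<in>I. h i = \<gamma>}. Q i) \<noteq> {}"
    using assms(1,2) by (auto intro!: clopen_in_Union)
next
  fix \<gamma> \<gamma>' :: 'c assume "\<gamma> \<noteq> \<gamma>'"
  then have "Q i \<inter> Q j = {}" if "i \<in> I" "j \<in> I" "h i = \<gamma>" "h j = \<gamma>'" for i j
    using assms(3) that \<open>\<gamma> \<noteq> \<gamma>'\<close> by metis
  then show "(\<Union>i\<in>{i\<in>I. h i = \<gamma>}. Q i) \<inter> (\<Union>i\<in>{i\<in>I. h i = \<gamma>'}. Q i) = {}"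
    by blast
next
  have "(\<Union>\<gamma>\<in>h ` {i\<in>I. Q i \<noteq> {}}. \<Union>i\<in>{i\<in>I. h i = \<gamma>}. Q i) = (\<Union>i\<in>I. Q i)"
    by blast
  then show "(\<Union>\<gamma>\<in>h ` {i\<in>I. Q i \<noteq> {}}. \<Union>i\<in>{i\<in>I. h i = \<gamma>}. Q i) = topspace X"
    using assms(4) by simp
qed

lemma cantor_product_not_openin_singleton:
  "\<not> openin (product_topology (\<lambda>_::nat. discrete_topology (UNIV::bool set)) UNIV) {x}"
proof
  assume "openin (product_topology (\<lambda>_::nat. discrete_topology (UNIV::bool set)) UNIV) {x}"
  then obtain U where fin: "finite {i. U i \<noteq> UNIV}" and x: "x \<in> Pi\<^sub>E UNIV U"
      and sub: "Pi\<^sub>E UNIV U \<subseteq> {x}"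
    unfolding openin_product_topology_alt by auto
  obtain n where "n \<notin> {i. U i \<noteq> UNIV}"
    using fin infinite_UNIV_nat by (metis ex_new_if_finite)
  then have "x(n := \<not> x n) \<in> Pi\<^sub>E UNIV U" using x by (auto simp: PiE_def Pi_def)
  then show False using sub by (metis fun_upd_same singleton_iff subsetD)
qed

lemma cantor_space_clopen_split:
  assumes "cantor_space X" "clopen_in X C" "C \<noteq> {}"
  obtains C1 C2 where "clopen_in X C1" "clopen_in X C2" "C1 \<noteq> {}" "C2 \<noteq> {}"
    "C1 \<inter> C2 = {}" "C1 \<union> C2 = C"
proof -
  let ?Y = "product_topology (\<lambda>_::nat. discrete_topology (UNIV::bool set)) UNIV"
  obtain \<phi> where hom: "homeomorphic_map X ?Y \<phi>"
    using assms(1) unfolding cantor_space_def homeomorphic_space by blast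
  have CX: "C \<subseteq> topspace X" using clopen_in_subset[OF assms(2)] .
  obtain p where p: "p \<in> C" using assms(3) by blast
  have "C \<noteq> {p}"
    using homeomorphic_map_openness_eq[OF hom] assms(2) CX cantor_product_not_openin_singleton
    unfolding clopen_in_def by (metis image_empty image_insert)
  then obtain q where q: "q \<in> C" "q \<noteq> p" using p by blast
  have "\<phi> p \<noteq> \<phi> q"
    using homeomorphic_imp_injective_map[OF hom] CX p q by (metis inj_onD subsetD)
  then obtain n where n: "\<phi> p n \<noteq> \<phi> q n" by blast
  have cont: "continuous_map X (discrete_topology (UNIV::bool set)) (\<lambda>x. \<phi> x n)"
    using continuous_map_compose[OF homeomorphic_imp_continuous_map[OF hom]
        continuous_map_product_projection[of n UNIV "\<lambda>_. discrete_topology UNIV"]]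
    by (simp add: comp_def)
  have S: "clopen_in X {x \<in> topspace X. \<phi> x n \<in> {\<phi> p n}}" (is "clopen_in X ?S")
    using openin_continuous_map_preimage[OF cont, of "{\<phi> p n}"]
      closedin_continuous_map_preimage[OF cont, of "{\<phi> p n}"]
    unfolding clopen_in_def by simp
  show thesis
  proof
    show "clopen_in X (C \<inter> ?S)" "clopen_in X (C - ?S)"
      using clopen_in_Int[OF assms(2) S] clopen_in_Diff[OF assms(2) S] .
    show "C \<inter> ?S \<noteq> {}" "C - ?S \<noteq> {}" using p q n CX by auto
  qed auto
qed

section \<open>Groups of homeomorphisms\<close>

locale homeo_group =
  fixes X :: "'a topology" and G :: "('a \<Rightarrow> 'a) set"
  assumes subgroup: "subgroup_Homeo X G"
begin

lemma member_homeomorphic_map: "f \<in> G \<Longrightarrow> homeomorphic_map X X f"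
  using subgroup unfolding subgroup_Homeo_def Homeo_def by auto

lemma member_fixes_outside: "f \<in> G \<Longrightarrow> p \<notin> topspace X \<Longrightarrow> f p = p"
  using subgroup unfolding subgroup_Homeo_def Homeo_def by auto

lemma member_image_topspace: "f \<in> G \<Longrightarrow> f ` topspace X = topspace X"
  using homeomorphic_imp_surjective_map member_homeomorphic_map by blast

lemma id_closed: "id \<in> G"
  using subgroup unfolding subgroup_Homeo_def by auto

lemma comp_closed: "f \<in> G \<Longrightarrow> h \<in> G \<Longrightarrow> h \<circ> f \<in> G"
  using subgroup unfolding subgroup_Homeo_def by auto

lemma inv_closed: "f \<in> G \<Longrightarrow> inv f \<in> G"
  using subgroup unfolding subgroup_Homeo_def by auto

lemma member_bij:
  assumes "f \<in> G"
  shows "bij f"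
proof -
  have "bij_betw f (topspace X) (topspace X)"
    using member_homeomorphic_map[OF assms] by (simp add: homeomorphic_imp_injective_map
        homeomorphic_imp_surjective_map bij_betw_def)
  moreover have "bij_betw f (- topspace X) (- topspace X)"
    using member_fixes_outside[OF assms] by (simp add: bij_betw_def inj_on_def image_def)
  ultimately show ?thesis
    using bij_betw_combine[of f "topspace X" _ "- topspace X"] by fastforce
qed

lemma members_inj: "\<Gamma> \<subseteq> G \<Longrightarrow> \<forall>\<gamma>\<in>\<Gamma>. inj \<gamma>"
  using member_bij bij_is_inj by blast

lemma clopen_in_member_image: "f \<in> G \<Longrightarrow> clopen_in X A \<Longrightarrow> clopen_in X (f ` A)"
  using member_homeomorphic_map homeomorphic_map_openness homeomorphic_map_closedness clopen_in_subset
  unfolding clopen_in_def by metis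

lemma orbitG_self: "A \<in> orbitG G A"
  unfolding orbitG_def by (intro CollectI exI[of _ id]) (simp add: id_closed)

lemma clopen_partition_image:
  assumes D: "clopen_partition X \<Gamma> D" and "\<Gamma> \<subseteq> G" and f: "bij_betw f (topspace X) (topspace X)"
    and agree: "\<forall>\<gamma>\<in>\<Gamma>. \<forall>p\<in>D \<gamma>. \<gamma> p = f p"
  shows "clopen_partition X \<Gamma> (\<lambda>\<gamma>. \<gamma> ` D \<gamma>)"
proof -
  from D have clopen: "\<forall>\<gamma>\<in>\<Gamma>. clopen_in X (D \<gamma>) \<and> D \<gamma> \<noteq> {}"
    and disjoint: "\<forall>\<gamma>\<in>\<Gamma>. \<forall>\<gamma>'\<in>\<Gamma>. \<gamma> \<noteq> \<gamma>' \<longrightarrow> D \<gamma> \<inter> D \<gamma>' = {}"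
    and cover: "(\<Union>\<gamma>\<in>\<Gamma>. D \<gamma>) = topspace X"
    unfolding clopen_partition_def by simp_all
  have image_eq: "\<gamma> ` D \<gamma> = f ` D \<gamma>" if "\<gamma> \<in> \<Gamma>" for \<gamma>
    using agree that by simp
  show ?thesis
    unfolding clopen_partition_def
  proof (intro conjI ballI impI)
    fix \<gamma> assume "\<gamma> \<in> \<Gamma>"
    then show "clopen_in X (\<gamma> ` D \<gamma>)" "\<gamma> ` D \<gamma> \<noteq> {}"
      using clopen clopen_in_member_image \<open>\<Gamma> \<subseteq> G\<close> by blast+
  next
    fix \<gamma> \<gamma>' assume \<gamma>: "\<gamma> \<in> \<Gamma>" "\<gamma>' \<in> \<Gamma>" "\<gamma> \<noteq> \<gamma>'"
    have "D \<gamma> \<subseteq> topspace X" "D \<gamma>' \<subseteq> topspace X" "D \<gamma> \<inter> D \<gamma>' = {}"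
      using cover disjoint \<gamma> by blast+
    then have "f ` D \<gamma> \<inter> f ` D \<gamma>' = {}"
      using inj_on_image_Int[OF bij_betw_imp_inj_on[OF f]] by (metis image_empty)
    then show "\<gamma> ` D \<gamma> \<inter> \<gamma>' ` D \<gamma>' = {}" using image_eq \<gamma> by simp
  next
    have "(\<Union>\<gamma>\<in>\<Gamma>. \<gamma> ` D \<gamma>) = f ` (\<Union>\<gamma>\<in>\<Gamma>. D \<gamma>)" using image_eq by auto
    then show "(\<Union>\<gamma>\<in>\<Gamma>. \<gamma> ` D \<gamma>) = topspace X"
      using cover bij_betw_imp_surj_on[OF f] by simp
  qed
qed

lemma permute_translates_id_in_G:
  "\<Gamma> \<subseteq> G \<Longrightarrow> disjoint_translates \<Gamma> P \<Longrightarrow> permute_translates \<Gamma> P id \<in> G"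
  using permute_translates_id members_inj id_closed by metis

lemma permute_translates_comp_in_G:
  assumes "\<Gamma> \<subseteq> G" "disjoint_translates \<Gamma> P" "\<tau> permutes \<Gamma>"
    and "permute_translates \<Gamma> P \<sigma> \<in> G" "permute_translates \<Gamma> P \<tau> \<in> G"
  shows "permute_translates \<Gamma> P (\<sigma> \<circ> \<tau>) \<in> G"
proof -
  have "\<forall>\<gamma>\<in>\<Gamma>. \<tau> \<gamma> \<in> \<Gamma>" using permutes_in_image[OF assms(3)] by blast
  then have "permute_translates \<Gamma> P (\<sigma> \<circ> \<tau>) = permute_translates \<Gamma> P \<sigma> \<circ> permute_translates \<Gamma> P \<tau>"
    using permute_translates_comp[OF assms(2) members_inj[OF assms(1)]] by simp
  then show ?thesis using comp_closed[OF assms(5,4)] by simp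
qed

lemma permute_translates_permutes_topspace:
  assumes "\<Gamma> \<subseteq> G" "disjoint_translates \<Gamma> P" "P \<subseteq> topspace X" "\<sigma> permutes \<Gamma>"
  shows "permute_translates \<Gamma> P \<sigma> permutes topspace X"
proof (rule permutes_subset)
  show "permute_translates \<Gamma> P \<sigma> permutes (\<Union>\<gamma>\<in>\<Gamma>. \<gamma> ` P)"
    using permute_translates_permutes[OF assms(2) members_inj[OF assms(1)] assms(4)] .
  show "(\<Union>\<gamma>\<in>\<Gamma>. \<gamma> ` P) \<subseteq> topspace X" using member_image_topspace assms(1,3) by blast
qed

end

locale approx_full_group = homeo_group +
  assumes approx_full: "approx_full X G"
begin

text \<open>Pieces carrying the same map are merged, as approx_full indexes a partition by the maps.\<close>

lemma approx_full_indexed: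
  assumes "finite I" and clopen: "\<forall>i\<in>I. clopen_in X (Q i)"
    and disjoint: "\<forall>i\<in>I. \<forall>j\<in>I. i \<noteq> j \<longrightarrow> Q i \<inter> Q j = {}" and cover: "(\<Union>i\<in>I. Q i) = topspace X"
    and h: "\<forall>i\<in>I. h i \<in> G" and f: "bij_betw f (topspace X) (topspace X)"
    and agree: "\<forall>i\<in>I. \<forall>p\<in>Q i. f p = h i p"
    and e: "e \<in> I" "Q e \<noteq> {}" "\<forall>i\<in>I. i \<noteq> e \<longrightarrow> Q i \<noteq> {} \<longrightarrow> h i \<noteq> h e"
  shows "\<exists>ch\<in>G. \<forall>i\<in>I - {e}. \<forall>p\<in>Q i. ch p = f p"
proof -
  define \<Gamma> where "\<Gamma> = h ` {i\<in>I. Q i \<noteq> {}}"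
  define D where "D = (\<lambda>\<gamma>. \<Union>i\<in>{i\<in>I. h i = \<gamma>}. Q i)"
  have D: "clopen_partition X \<Gamma> D"
    unfolding \<Gamma>_def D_def by (rule clopen_partition_merge[OF assms(1-4)])
  have "\<Gamma> \<subseteq> G" "h e \<in> \<Gamma>" using h e unfolding \<Gamma>_def by auto
  moreover have "clopen_partition X \<Gamma> (\<lambda>\<gamma>. \<gamma> ` D \<gamma>)"
    using clopen_partition_image[OF D \<open>\<Gamma> \<subseteq> G\<close> f] agree unfolding D_def by fastforce
  moreover have "finite \<Gamma>" using assms(1) unfolding \<Gamma>_def by simp
  ultimately obtain ch where "ch \<in> G" and ch: "\<forall>\<gamma>\<in>\<Gamma> - {h e}. \<forall>p\<in>D \<gamma>. ch p = \<gamma> p"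
    using approx_full D unfolding approx_full_def by blast
  moreover have "ch p = f p" if "i \<in> I - {e}" "p \<in> Q i" for i p
  proof -
    have "h i \<in> \<Gamma> - {h e}" "p \<in> D (h i)" using that e(3) unfolding \<Gamma>_def D_def by auto
    then show ?thesis using ch agree that by auto
  qed
  ultimately show ?thesis by blast
qed

text \<open>Approximate fullness gives no control over one piece of the partition.  That piece is
  made W, labelled by \<omega>, which agrees with the transposition there (both are the identity on W)
  but differs from the maps used on the other pieces.\<close>

lemma transposition_realised_off:
  assumes \<Gamma>: "\<Gamma> \<subseteq> G" and dj: "disjoint_translates \<Gamma> P" and P: "clopen_in X P" "P \<noteq> {}"
    and xy: "x \<in> \<Gamma>" "y \<in> \<Gamma>" "x \<noteq> y"
    and W: "clopen_in X W" "W \<noteq> {}" "\<forall>\<gamma>\<in>\<Gamma>. W \<inter> \<gamma> ` P = {}"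
    and \<omega>: "\<omega> \<in> G" "\<forall>p \<in> x ` P \<union> y ` P \<union> W. \<omega> p = p" "\<omega> \<noteq> id"
  shows "\<exists>ch\<in>G. \<forall>p. p \<notin> W \<longrightarrow> ch p = permute_translates \<Gamma> P (Transposition.transpose x y) p"
proof -
  define f where "f = permute_translates \<Gamma> P (Transposition.transpose x y)"
  define R where "R = topspace X - (x ` P \<union> y ` P \<union> W)"
  define Q where "Q = (!) [x ` P, y ` P, R, W]"
  define h where "h = (!) [y \<circ> inv x, x \<circ> inv y, id, \<omega>]"
  have inj: "\<forall>\<gamma>\<in>\<Gamma>. inj \<gamma>" using members_inj[OF \<Gamma>] .
  have f: "f permutes topspace X" unfolding f_def
    using permute_translates_permutes_topspace[OF \<Gamma> dj clopen_in_subset[OF P(1)] permutes_swap_id[OF xy(1,2)]] .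
  have xyG: "x \<in> G" "y \<in> G" using xy \<Gamma> by blast+
  have xP_yP: "x ` P \<inter> y ` P = {}" using dj xy unfolding disjoint_translates_def by blast
  have clopen: "\<forall>i\<in>{0, 1, 2, 3}. clopen_in X (Q i)"
    using clopen_in_member_image[OF _ P(1)] xyG W(1)
    by (simp add: Q_def R_def clopen_in_Diff clopen_in_Un clopen_in_topspace)
  have disjoint: "\<forall>i\<in>{0, 1, 2, 3}. \<forall>j\<in>{0, 1, 2, 3}. i \<noteq> j \<longrightarrow> Q i \<inter> Q j = {}"
    using xP_yP W(3) xy by (auto simp: Q_def R_def) blast+
  have cover: "(\<Union>i\<in>{0, 1, 2, 3}. Q i) = topspace X"
    using clopen_in_subset clopen xy by (auto simp: Q_def R_def)
  have h: "\<forall>i\<in>{0, 1, 2, 3}. h i \<in> G"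
    using comp_closed inv_closed xyG id_closed \<omega>(1) by (simp add: h_def)
  have "\<forall>p\<in>R \<union> W. f p = p"
    using permute_translates_transpose_other[OF dj inj] W(3) xy unfolding R_def f_def by blast
  then have agree: "\<forall>i\<in>{0, 1, 2, 3}. \<forall>p\<in>Q i. f p = h i p"
    using permute_translates_transpose_apply[OF dj inj xy(1,2)] inj xy \<omega>(2)
    by (auto simp: Q_def h_def f_def inv_f_f)
  obtain u where u: "u \<in> P" using P(2) by blast
  have "(y \<circ> inv x) (x u) = y u" "(x \<circ> inv y) (y u) = x u" using inj xy by (simp_all add: inv_f_f)
  moreover have "\<omega> (x u) = x u" "\<omega> (y u) = y u" "x u \<noteq> y u" using \<omega>(2) xP_yP u by blast+
  ultimately have "y \<circ> inv x \<noteq> \<omega>" "x \<circ> inv y \<noteq> \<omega>" by metis+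
  then have distinct: "\<forall>i\<in>{0, 1, 2, 3}. i \<noteq> 3 \<longrightarrow> Q i \<noteq> {} \<longrightarrow> h i \<noteq> h 3"
    using \<omega>(3) by (simp add: h_def)
  have "Q 3 \<noteq> {}" using W(2) by (simp add: Q_def)
  from approx_full_indexed[OF _ clopen disjoint cover h permutes_imp_bij[OF f] agree _ this distinct]
  obtain ch where "ch \<in> G" and "\<forall>i\<in>{0::nat, 1, 2}. \<forall>p\<in>Q i. ch p = f p"
    by (auto simp: insert_Diff_if)
  then have ch: "\<forall>p \<in> x ` P \<union> y ` P \<union> R. ch p = f p" by (auto simp: Q_def)
  have "ch p = f p" if "p \<notin> W" for p
  proof (cases "p \<in> topspace X")
    case True
    then show ?thesis using ch that unfolding R_def by blast
  next
    case False
    then show ?thesis using member_fixes_outside[OF \<open>ch \<in> G\<close>] permutes_not_in[OF f] by simp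
  qed
  then show ?thesis using \<open>ch \<in> G\<close> unfolding f_def by blast
qed

end

locale vigorous_group = homeo_group +
  assumes cantor: "cantor_space X" and vigorous: "vigorous X G"
begin

lemma exists_nontrivial_supported_in:
  assumes "clopen_in X W" "W \<noteq> {}"
  obtains \<omega> where "\<omega> \<in> G" "\<forall>p. p \<notin> W \<longrightarrow> \<omega> p = p" "\<omega> \<noteq> id"
proof -
  obtain W1 W2 where W: "clopen_in X W1" "clopen_in X W2" "W1 \<noteq> {}" "W2 \<noteq> {}" "W1 \<inter> W2 = {}"
      "W1 \<union> W2 = W"
    using cantor_space_clopen_split[OF cantor assms] by metis
  then have "W1 \<subset> W" "W2 \<subset> W" by blast+
  then obtain \<omega> where \<omega>: "\<omega> \<in> G" "supp X \<omega> \<subseteq> W" "\<omega> ` W1 \<subseteq> W2"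
    using vigorous[unfolded vigorous_def, rule_format, of W W1 W2] W assms(1) by blast
  have "\<forall>p. p \<notin> W \<longrightarrow> \<omega> p = p"
    using \<omega>(2) member_fixes_outside[OF \<omega>(1)] unfolding supp_def by blast
  moreover have "\<omega> \<noteq> id"
  proof -
    obtain u where "u \<in> W1" using W(3) by blast
    then have "\<omega> u \<in> W2" using \<omega>(3) by blast
    then show ?thesis using \<open>u \<in> W1\<close> W(5) by auto
  qed
  ultimately show thesis using that \<omega>(1) by blast
qed

lemma exists_disjoint_images:
  assumes "U \<in> Kset X"
  obtains \<mu> \<nu> where "\<mu> \<in> G" "\<nu> \<in> G" "\<mu> ` U \<inter> \<nu> ` U = {}" "\<mu> ` U \<union> \<nu> ` U \<noteq> topspace X"
proof -
  have U: "clopen_in X U" "U \<noteq> {}" "U \<subset> topspace X"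
    using assms clopen_in_subset unfolding Kset_def by auto
  then have "clopen_in X (topspace X - U)" "topspace X - U \<noteq> {}"
    using clopen_in_Diff[OF clopen_in_topspace] by auto
  then obtain S1 S2 where S: "clopen_in X S1" "clopen_in X S2" "S1 \<noteq> {}" "S2 \<noteq> {}"
      "S1 \<inter> S2 = {}" "S1 \<union> S2 = topspace X - U"
    using cantor_space_clopen_split[OF cantor] by metis
  then have "S1 \<subset> topspace X" "S2 \<subset> topspace X" using U by auto
  then obtain \<mu> \<nu> where \<mu>: "\<mu> \<in> G" "\<mu> ` U \<subseteq> S1" and \<nu>: "\<nu> \<in> G" "\<nu> ` U \<subseteq> S2"
    using vigorous[unfolded vigorous_def, rule_format, of "topspace X" U] clopen_in_topspace U S(1-4)
    by metis
  have "\<mu> ` U \<union> \<nu> ` U \<subseteq> topspace X - U" using \<mu>(2) \<nu>(2) S(6) by blast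
  then have "\<mu> ` U \<union> \<nu> ` U \<noteq> topspace X" using U by blast
  moreover have "\<mu> ` U \<inter> \<nu> ` U = {}" using \<mu>(2) \<nu>(2) S(5) by blast
  ultimately show thesis using that \<mu>(1) \<nu>(1) by blast
qed

lemma orbit_add_self:
  assumes "U \<in> Kset X"
  shows "\<exists>U' V' \<mu> \<nu>. U' \<in> Kset X \<and> V' \<in> Kset X \<and> \<mu> \<in> G \<and> \<nu> \<in> G \<and>
      orbitG G U = orbitG G U' \<and> orbitG G U = orbitG G V' \<and> \<mu> ` U' \<inter> \<nu> ` V' = {} \<and>
      \<mu> ` U' \<union> \<nu> ` V' \<noteq> topspace X \<and>
      orbit_add X G (orbitG G U) (orbitG G U) = orbitG G (\<mu> ` U' \<union> \<nu> ` V')"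
    (is "?sum (orbit_add X G (orbitG G U) (orbitG G U))")
proof -
  obtain \<mu> \<nu> where "\<mu> \<in> G" "\<nu> \<in> G" "\<mu> ` U \<inter> \<nu> ` U = {}" "\<mu> ` U \<union> \<nu> ` U \<noteq> topspace X"
    using exists_disjoint_images[OF assms] by metis
  then have "?sum (orbitG G (\<mu> ` U \<union> \<nu> ` U))"
    using assms by (intro exI[of _ U] exI[of _ \<mu>] exI[of _ \<nu>]) simp
  then show ?thesis unfolding orbit_add_def by (rule someI[of ?sum])
qed

lemma even_orbit_split:
  assumes "C \<in> Kset X" "even_orbit X G (orbitG G C)"
  obtains P l where "clopen_in X P" "P \<noteq> {}" "l \<in> G" "P \<inter> l ` P = {}" "C = P \<union> l ` P"
proof -
  obtain U where U: "U \<in> Kset X" and C: "orbitG G C = orbit_add X G (orbitG G U) (orbitG G U)"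
    using assms(2) unfolding even_orbit_def orbits_def by blast
  from orbit_add_self[OF U] obtain U' V' \<mu> \<nu> where U': "U' \<in> Kset X" and \<mu>\<nu>: "\<mu> \<in> G" "\<nu> \<in> G"
    and orbits: "orbitG G U = orbitG G U'" "orbitG G U = orbitG G V'"
    and disj: "\<mu> ` U' \<inter> \<nu> ` V' = {}"
    and sum: "orbit_add X G (orbitG G U) (orbitG G U) = orbitG G (\<mu> ` U' \<union> \<nu> ` V')"
    by blast
  obtain \<beta> where \<beta>: "\<beta> \<in> G" "C = \<beta> ` (\<mu> ` U' \<union> \<nu> ` V')"
    using orbitG_self[of C] C sum unfolding orbitG_def by auto
  have "V' \<in> orbitG G U'" using orbitG_self[of V'] orbits by simp
  then obtain \<kappa> where \<kappa>: "\<kappa> \<in> G" "V' = \<kappa> ` U'" unfolding orbitG_def by blast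
  define P where "P = \<beta> ` \<mu> ` U'"
  define l where "l = \<beta> \<circ> \<nu> \<circ> \<kappa> \<circ> inv \<mu> \<circ> inv \<beta>"
  have inj: "inj \<beta>" "inj \<mu>" using member_bij bij_is_inj \<beta>(1) \<mu>\<nu>(1) by blast+
  have "inv \<mu> ` inv \<beta> ` P = U'" unfolding P_def using inj by (simp add: image_inv_f_f)
  moreover have "l ` P = \<beta> ` \<nu> ` \<kappa> ` inv \<mu> ` inv \<beta> ` P" unfolding l_def by (simp add: image_comp)
  ultimately have lP: "l ` P = \<beta> ` \<nu> ` V'" using \<kappa>(2) by simp
  show thesis
  proof
    show "clopen_in X P" unfolding P_def
      using U' \<beta>(1) \<mu>\<nu>(1) clopen_in_member_image unfolding Kset_def by blast
    show "P \<noteq> {}" unfolding P_def using U' unfolding Kset_def by blast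
    show "l \<in> G" unfolding l_def using \<beta>(1) \<mu>\<nu> \<kappa>(1) comp_closed inv_closed by metis
    show "P \<inter> l ` P = {}" unfolding lP unfolding P_def using disj inj(1) by (simp add: image_Int[symmetric])
    show "C = P \<union> l ` P" unfolding lP unfolding P_def \<beta>(2) by (rule image_Un)
  qed
qed

end

locale vigorous_approx_full_group = vigorous_group + approx_full_group
begin

lemma transposition_realised_off_translate:
  assumes \<Gamma>: "\<Gamma> \<subseteq> G" and dj: "disjoint_translates \<Gamma> (P \<union> Q)" and PQ: "P \<inter> Q = {}"
    and P: "clopen_in X P" "P \<noteq> {}" and Q: "clopen_in X Q" "Q \<noteq> {}"
    and xy: "x \<in> \<Gamma>" "y \<in> \<Gamma>" "x \<noteq> y" and zw: "z \<in> \<Gamma>" "w \<in> \<Gamma>" "z \<noteq> w"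
  shows "\<exists>ch\<in>G. \<forall>p. p \<notin> z ` Q \<longrightarrow> ch p = permute_translates \<Gamma> P (Transposition.transpose x y) p"
proof -
  have inj: "\<forall>\<gamma>\<in>\<Gamma>. inj \<gamma>" using members_inj[OF \<Gamma>] .
  have djP: "disjoint_translates \<Gamma> P" and djQ: "disjoint_translates \<Gamma> Q"
    using disjoint_translates_mono[OF dj] by blast+
  have off_P: "\<gamma> ` P \<inter> \<gamma>' ` Q = {}" if "\<gamma> \<in> \<Gamma>" "\<gamma>' \<in> \<Gamma>" for \<gamma> \<gamma>'
    using disjoint_translates_image_neq[OF dj PQ] inj that by blast
  have zQ_wQ: "z ` Q \<inter> w ` Q = {}" using djQ zw unfolding disjoint_translates_def by blast
  have "clopen_in X (w ` Q)" "w ` Q \<noteq> {}" using clopen_in_member_image Q \<Gamma> zw by blast+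
  then obtain \<omega> where \<omega>: "\<omega> \<in> G" "\<forall>p. p \<notin> w ` Q \<longrightarrow> \<omega> p = p" "\<omega> \<noteq> id"
    by (rule exists_nontrivial_supported_in)
  have \<omega>_fixes: "\<forall>p \<in> x ` P \<union> y ` P \<union> z ` Q. \<omega> p = p"
    using \<omega>(2) zQ_wQ off_P[of _ w] xy zw by blast
  have zQ: "clopen_in X (z ` Q)" "z ` Q \<noteq> {}" "\<forall>\<gamma>\<in>\<Gamma>. z ` Q \<inter> \<gamma> ` P = {}"
    using clopen_in_member_image Q \<Gamma> zw off_P by blast+
  show ?thesis by (rule transposition_realised_off[OF \<Gamma> djP P xy zQ \<omega>(1) \<omega>_fixes \<omega>(3)])
qed

text \<open>The transpositions (b c) and (a b) of the translates of P are realised off the disjoint sets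
  a ` Q and c ` Q, on which both act trivially; so the commutator of the realisations is exact and
  equals the square of the 3-cycle (b c)(a b), which is (a b)(b c).\<close>

lemma permute_translates_three_cycle_on_part_in_G:
  assumes \<Gamma>: "\<Gamma> \<subseteq> G" and dj: "disjoint_translates \<Gamma> (P \<union> Q)" and PQ: "P \<inter> Q = {}"
    and P: "clopen_in X P" "P \<noteq> {}" and Q: "clopen_in X Q" "Q \<noteq> {}"
    and abc: "a \<in> \<Gamma>" "b \<in> \<Gamma>" "c \<in> \<Gamma>" "a \<noteq> b" "b \<noteq> c" "a \<noteq> c"
  shows "permute_translates \<Gamma> P (Transposition.transpose a b \<circ> Transposition.transpose b c) \<in> G"
proof -
  define s1 where "s1 = permute_translates \<Gamma> P (Transposition.transpose b c)"
  define s2 where "s2 = permute_translates \<Gamma> P (Transposition.transpose a b)"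
  have inj: "\<forall>\<gamma>\<in>\<Gamma>. inj \<gamma>" using members_inj[OF \<Gamma>] .
  have djP: "disjoint_translates \<Gamma> P" using disjoint_translates_mono[OF dj] by blast
  obtain c1 where c1: "c1 \<in> G" "\<forall>p. p \<notin> a ` Q \<longrightarrow> c1 p = s1 p"
    using transposition_realised_off_translate[OF \<Gamma> dj PQ P Q, of b c a c] abc unfolding s1_def by blast
  obtain c2 where c2: "c2 \<in> G" "\<forall>p. p \<notin> c ` Q \<longrightarrow> c2 p = s2 p"
    using transposition_realised_off_translate[OF \<Gamma> dj PQ P Q, of a b c a] abc unfolding s2_def by blast
  have "\<not> (\<exists>\<gamma>\<in>\<Gamma>. p \<in> \<gamma> ` P)" if "p \<in> a ` Q \<union> c ` Q" for p
    using disjoint_translates_image_neq[OF dj PQ] inj abc that by blast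
  then have "\<forall>p \<in> a ` Q \<union> c ` Q. s1 p = p" "\<forall>p \<in> a ` Q \<union> c ` Q. s2 p = p"
    unfolding s1_def s2_def by (simp_all add: permute_translates_outside)
  moreover have "a ` Q \<inter> c ` Q = {}"
    using disjoint_translates_mono[OF dj, of Q] abc unfolding disjoint_translates_def by blast
  moreover have "s1 \<circ> s1 = id" "s2 \<circ> s2 = id"
    unfolding s1_def s2_def using permute_translates_transpose_involution[OF djP inj] abc by simp_all
  ultimately have "c1 \<circ> c2 \<circ> inv c1 \<circ> inv c2 = s1 \<circ> s2 \<circ> s1 \<circ> s2"
    using commutator_of_perturbed_involutions[OF member_bij[OF c1(1)] member_bij[OF c2(1)] c1(2) c2(2)] by blast
  also have "\<dots> = permute_translates \<Gamma> P (Transposition.transpose a b \<circ> Transposition.transpose b c)"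
    unfolding s1_def s2_def by (rule permute_translates_three_cycle_square[OF djP inj abc])
  finally show ?thesis using c1(1) c2(1) comp_closed inv_closed by metis
qed

lemma permute_translates_three_cycle_in_G:
  assumes \<Gamma>: "\<Gamma> \<subseteq> G" and dj: "disjoint_translates \<Gamma> P" and P: "clopen_in X P" "P \<noteq> {}"
    and abc: "a \<in> \<Gamma>" "b \<in> \<Gamma>" "c \<in> \<Gamma>" "a \<noteq> b" "b \<noteq> c"
  shows "permute_translates \<Gamma> P (Transposition.transpose a b \<circ> Transposition.transpose b c) \<in> G"
proof (cases "a = c")
  case True
  then show ?thesis
    using permute_translates_id[OF dj members_inj[OF \<Gamma>]] id_closed by (simp add: transpose_commute)
next
  case False
  obtain P1 P2 where P12: "clopen_in X P1" "clopen_in X P2" "P1 \<noteq> {}" "P2 \<noteq> {}" "P1 \<inter> P2 = {}"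
      "P1 \<union> P2 = P"
    using cantor_space_clopen_split[OF cantor P] by metis
  let ?\<sigma> = "Transposition.transpose a b \<circ> Transposition.transpose b c"
  have "\<forall>\<gamma>\<in>\<Gamma>. ?\<sigma> \<gamma> \<in> \<Gamma>"
    using permutes_in_image[OF permutes_swap_id[OF abc(1,2)]]
      permutes_in_image[OF permutes_swap_id[OF abc(2,3)]] by simp
  then have "permute_translates \<Gamma> P ?\<sigma> = permute_translates \<Gamma> P1 ?\<sigma> \<circ> permute_translates \<Gamma> P2 ?\<sigma>"
    using permute_translates_Un[OF _ P12(5) members_inj[OF \<Gamma>]] dj P12(6) by blast
  moreover have "permute_translates \<Gamma> P1 ?\<sigma> \<in> G"
    using permute_translates_three_cycle_on_part_in_G[OF \<Gamma> _ P12(5) P12(1,3) P12(2,4) abc False] dj P12(6) by blast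
  moreover have "permute_translates \<Gamma> P2 ?\<sigma> \<in> G"
    using permute_translates_three_cycle_on_part_in_G[OF \<Gamma> _ _ P12(2,4) P12(1,3) abc False] dj P12(5,6)
    by (simp add: Un_commute Int_commute)
  ultimately show ?thesis using comp_closed by simp
qed

lemma permute_translates_evenperm_in_G:
  assumes \<Gamma>: "\<Gamma> \<subseteq> G" "finite \<Gamma>" and dj: "disjoint_translates \<Gamma> P" and P: "clopen_in X P" "P \<noteq> {}"
    and \<sigma>: "\<sigma> permutes \<Gamma>" "evenperm \<sigma>"
  shows "permute_translates \<Gamma> P \<sigma> \<in> G"
proof -
  let ?S = "{\<sigma>. \<sigma> permutes \<Gamma> \<and> permute_translates \<Gamma> P \<sigma> \<in> G}"
  have "\<sigma> \<in> ?S"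
  proof (rule evenperm_in_closure[OF \<Gamma>(2) \<sigma>])
    show "id \<in> ?S" using permute_translates_id_in_G[OF \<Gamma>(1) dj] permutes_id by simp
    show "\<sigma> \<circ> \<tau> \<in> ?S" if "\<sigma> \<in> ?S" "\<tau> \<in> ?S" for \<sigma> \<tau>
      using that permute_translates_comp_in_G[OF \<Gamma>(1) dj] by (auto intro: permutes_compose)
  next
    fix a b c assume abc: "a \<in> \<Gamma>" "b \<in> \<Gamma>" "c \<in> \<Gamma>" "a \<noteq> b" "b \<noteq> c"
    then have "permute_translates \<Gamma> P (Transposition.transpose a b \<circ> Transposition.transpose b c) \<in> G"
      by (rule permute_translates_three_cycle_in_G[OF \<Gamma>(1) dj P])
    moreover have "Transposition.transpose a b \<circ> Transposition.transpose b c permutes \<Gamma>"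
      by (rule permutes_compose[OF permutes_swap_id[OF abc(2,3)] permutes_swap_id[OF abc(1,2)]])
    ultimately show "Transposition.transpose a b \<circ> Transposition.transpose b c \<in> ?S" by simp
  qed
  then show ?thesis by simp
qed
lemma permute_translates_doubled_in_G:
  assumes \<Gamma>: "\<Gamma> \<subseteq> G" "finite \<Gamma>" and dj: "disjoint_translates \<Gamma> (P \<union> l ` P)"
    and P: "clopen_in X P" "P \<noteq> {}" and l: "l \<in> G" "P \<inter> l ` P = {}" and \<sigma>: "\<sigma> permutes \<Gamma>"
  shows "permute_translates \<Gamma> (P \<union> l ` P) \<sigma> \<in> G"
proof -
  let ?S = "{\<sigma>. \<sigma> permutes \<Gamma> \<and> permute_translates \<Gamma> (P \<union> l ` P) \<sigma> \<in> G}"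
  let ?\<Gamma>2 = "\<Gamma> \<union> (\<lambda>\<gamma>. \<gamma> \<circ> l) ` \<Gamma>"
  have inj: "\<forall>\<gamma>\<in>\<Gamma>. inj \<gamma>" using members_inj[OF \<Gamma>(1)] .
  have \<Gamma>l: "\<Gamma> \<inter> (\<lambda>\<gamma>. \<gamma> \<circ> l) ` \<Gamma> = {}" using right_translates_disjoint[OF dj l(2) P(2) inj] .
  have dj2: "disjoint_translates ?\<Gamma>2 P" using disjoint_translates_right_compose[OF dj l(2) inj] .
  have \<Gamma>2: "?\<Gamma>2 \<subseteq> G" "finite ?\<Gamma>2" using \<Gamma> l(1) comp_closed by auto
  have transposition: "permute_translates \<Gamma> (P \<union> l ` P) (Transposition.transpose a b) \<in> G"
    if ab: "a \<in> \<Gamma>" "b \<in> \<Gamma>" "a \<noteq> b" for a b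
  proof -
    let ?\<sigma>2 = "Transposition.transpose a b \<circ> Transposition.transpose (a \<circ> l) (b \<circ> l)"
    have "a \<circ> l \<noteq> b \<circ> l" using ab(3) comp_right_cancel[OF bij_is_surj[OF member_bij[OF l(1)]]] by blast
    then have even: "evenperm ?\<sigma>2"
      using evenperm_comp[OF permutation_swap_id permutation_swap_id, of a b "a \<circ> l" "b \<circ> l"]
        evenperm_swap[of a b] evenperm_swap[of "a \<circ> l" "b \<circ> l"] ab(3) by simp
    have "?\<sigma>2 permutes ?\<Gamma>2"
      using permutes_compose[OF permutes_swap_id permutes_swap_id, of "a \<circ> l" ?\<Gamma>2 "b \<circ> l" a b] ab
      by blast
    then have "permute_translates ?\<Gamma>2 P ?\<sigma>2 \<in> G" by (rule permute_translates_evenperm_in_G[OF \<Gamma>2 dj2 P _ even])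
    then show ?thesis
      using permute_translates_transpose_lift[OF dj l(2) inj member_bij[OF l(1)] \<Gamma>l ab(1,2)] by simp
  qed
  have "\<sigma> \<in> ?S"
    using \<Gamma>(2) \<sigma>
  proof (rule permutes_in_closure)
    show "id \<in> ?S" using permute_translates_id_in_G[OF \<Gamma>(1) dj] permutes_id by simp
    show "\<sigma> \<circ> \<tau> \<in> ?S" if "\<sigma> \<in> ?S" "\<tau> \<in> ?S" for \<sigma> \<tau>
      using that permute_translates_comp_in_G[OF \<Gamma>(1) dj] by (auto intro: permutes_compose)
    show "Transposition.transpose a b \<in> ?S" if "a \<in> \<Gamma>" "b \<in> \<Gamma>" "a \<noteq> b" for a b
      using that transposition permutes_swap_id by simp
  qed
  then show ?thesis by simp
qed

end

theorem lemma3p5: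
  fixes X :: "'a topology" and G :: "('a \<Rightarrow> 'a) set" and C :: "'a set"
    and \<Gamma> :: "('a \<Rightarrow> 'a) set" and g :: "('a \<Rightarrow> 'a) \<Rightarrow> ('a \<Rightarrow> 'a)" and \<delta> :: "'a \<Rightarrow> 'a"
  assumes "cantor_space X"
    and "subgroup_Homeo X G"
    and "vigorous X G"
    and "approx_full X G"
    and "C \<in> Kset X"
    and "finite \<Gamma>" and "\<Gamma> \<subseteq> G"
    and "\<forall>\<gamma>1\<in>\<Gamma>. \<forall>\<gamma>2\<in>\<Gamma>. \<gamma>1 ` C \<inter> \<gamma>2 ` C \<noteq> {} \<longrightarrow> \<gamma>1 = \<gamma>2"
    and "g permutes \<Gamma>"
    and "\<delta> \<in> Homeo X"
    and "supp X \<delta> \<subseteq> (\<Union>\<gamma>\<in>\<Gamma>. \<gamma> ` C)"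
    and "\<forall>\<gamma>\<in>\<Gamma>. \<forall>p\<in>\<gamma> ` C. \<delta> p = (g \<gamma>) (inv \<gamma> p)"
    and "even_orbit X G (orbitG G C) \<or> evenperm g"
  shows "\<delta> \<in> G"
proof -
  interpret vigorous_approx_full_group X G
    by unfold_locales (use assms(1-4) in auto)
  have C: "clopen_in X C" "C \<noteq> {}" using assms(5) unfolding Kset_def by blast+
  have dj: "disjoint_translates \<Gamma> C" unfolding disjoint_translates_def by (fact assms(8))
  have \<delta>: "\<delta> = permute_translates \<Gamma> C g"
    using Homeo_eq_permute_translates[OF assms(10-12) dj members_inj[OF assms(7)]] .
  from assms(13) show ?thesis
  proof
    assume "even_orbit X G (orbitG G C)"
    then obtain P l where P: "clopen_in X P" "P \<noteq> {}" and l: "l \<in> G" "P \<inter> l ` P = {}"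
      and "C = P \<union> l ` P"
      by (rule even_orbit_split[OF assms(5)])
    then show ?thesis using permute_translates_doubled_in_G[OF assms(7,6) _ P l assms(9)] dj \<delta> by simp
  next
    assume "evenperm g"
    then show ?thesis using permute_translates_evenperm_in_G[OF assms(7,6) dj C assms(9)] \<delta> by simp
  qed
qed

end
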